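(* Assume that every $f_m^j$ ($m\in[M]$, $j\in\{0,\dots,N-1\}$) is $\mu$-strongly convex with $\mu>0$ and $L$-smooth. Run the algorithm RR-CLI described in the context with client step size $0<\gamma\le \frac1L$, server step size $\eta=\gamma N$ and global step size $\theta=\eta R$. Then the iterates satisfy $$\mathbb{E}\big[\|x_T-x_\star\|^2\big]\le (1-\gamma\mu)^{NRT}\|x_0-x_\star\|^2+\frac{2\gamma^2}{\mu}\max_{t,r,m,j}\sigma^2_{m,\mathrm{DS}}(t,r,j),$$ where the maximum is over meta-epochs $t$, rounds $r\in\{0,\dots,R-1\}$, clients $m\in S_t^{\lambda_r}$ and $j\in\{0,\dots,N-1\}$, and $\sigma^2_{m,\mathrm{DS}}(t,r,j)$ is defined in the context.
   Context: Setting. There are $M$ clients, each holding $N$ data points. For $m\in[M]$ and $j\in\{0,\dots,N-1\}$, $f_m^j:\mathbb{R}^d\to\mathbb{R}$ is differentiable. Define $f_m=\frac1N\sum_j f_m^j$ and $f=\frac1M\sum_{m=1}^M f_m$, and let $x_\star$ be a minimizer of $f$. A function $h$ is $L$-smooth if $\|\nabla h(x)-\nabla h(y)\|\le L\|x-y\|$ for all $x,y$. It is $\mu$-strongly convex if $\langle\nabla h(x),y-x\rangle\le-(h(x)-h(y)+\frac\mu2\|x-y\|^2)$ for all $x,y$. The Bregman divergence is $D_h(x,y)=h(x)-h(y)-\langle\nabla h(y),x-y\rangle$. Algorithm RR-CLI. The inputs are a cohort size $C$ with $M=CR$ for an integer $R$, step sizes $\gamma,\eta,\theta>0$, an initial point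 $x_0\in\mathbb{R}^d$, and a number of meta-epochs $T\ge1$. In each meta-epoch $t=0,\dots,T-1$: - The $M$ clients are partitioned uniformly at random into $R$ disjoint cohorts of size $C$, taken in a uniformly random order $S_t^{\lambda_0},\dots,S_t^{\lambda_{R-1}}$. - Each client $m$ uses a uniformly random permutation $\pi_m=(\pi_m^0,\dots,\pi_m^{N-1})$ of its data indices. - All permutations are independent. They are either sampled once before the first meta-epoch and reused, or resampled independently at every meta-epoch; the result holds for either option. - Set $x_t^0=x_t$. For $r=0,\dots,R-1$, each client $m\in S_t^{\lambda_r}$ sets $x^{r,0}_{m,t}=x^r_t$ and computes $x^{r,j+1}_{m,t}=x^{r,j}_{m,t}-\gamma\nabla f_m^{\pi_m^j}(x^{r,j}_{m,t})$ for $j=0,\dots,N-1$, followed by $g^r_{m,t}=\frac{1}{\gamma N}(x^r_t-x^{r,N}_{m,t})$. - The server sets $g^r_t=\frac1C\sum_{m\in S_t^{\lambda_r}}g^r_{m,t}$ and $x^{r+1}_t=x^r_t-\eta g^r_t$. - Finally, $x_{t+1}=x_t-\theta\frac{x_t-x^R_t}{\eta R}$. Expectations are over the random permutations. Star sequence. In meta-epoch $t$, using the same cohorts and permutations as the algorithm, define $x^0_\star=x_\star$. For each $r$ and each $m\in S_t^{\lambda_r}$, set $x^{r,0}_{m,\star}=x^r_\star$, then $x^{r,j+1}_{m,\star}=x^{r,j}_{m,\star}-\gamma\nabla f_m^{\pi_m^j}(x_\star)$, and $x^{r+1}_\star=\frac1C\sum_{m\in S_t^{\lambda_r}}x^{r,N}_{m,\star}$.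 Finally set $\sigma^2_{m,\mathrm{DS}}(t,r,j)=\frac{1}{\gamma^2}\mathbb{E}\big[D_{f_m^{\pi_m^j}}(x^{r,j}_{m,\star},x_\star)\big]$. *)

theory Defs
  imports "HOL-Analysis.Analysis" "HOL-Combinatorics.Permutations"
begin

definition L_smooth :: "real \<Rightarrow> ('a::real_inner \<Rightarrow> 'a) \<Rightarrow> bool" where
  "L_smooth L g \<longleftrightarrow> (\<forall>x y. norm (g x - g y) \<le> L * norm (x - y))"

definition strongly_convex_grad :: "real \<Rightarrow> ('a::real_inner \<Rightarrow> real) \<Rightarrow> ('a \<Rightarrow> 'a) \<Rightarrow> bool" where
  "strongly_convex_grad \<mu> h g \<longleftrightarrow>
     (\<forall>x y. inner (g x) (y - x) \<le> - (h x - h y + \<mu> / 2 * (norm (x - y))\<^sup>2))"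

definition bregman :: "('a::real_inner \<Rightarrow> real) \<Rightarrow> ('a \<Rightarrow> 'a) \<Rightarrow> 'a \<Rightarrow> 'a \<Rightarrow> real" where
  "bregman h g x y = h x - h y - inner (g y) (x - y)"

text \<open>One meta-epoch outcome is a pair (sigma, pi): sigma is a permutation of the
clients {0..<M}; cohort r (in the random order) is the image of the block
{r*C..<r*C+C} under sigma, which gives a uniformly random partition into R cohorts of
size C taken in a uniformly random order.  pi m is the data permutation of client m.
Uniform sampling of all of these independently is the uniform distribution on the
finite set epoch_outcomes M N.\<close>

definition epoch_outcomes :: "nat \<Rightarrow> nat \<Rightarrow> ((nat \<Rightarrow> nat) \<times> (nat \<Rightarrow> nat \<Rightarrow> nat)) set" where
  "epoch_outcomes M N = {(\<sigma>, \<pi>). \<sigma> permutes {..<M} \<and>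
       (\<forall>m<M. \<pi> m permutes {..<N}) \<and> (\<forall>m\<ge>M. \<pi> m = id)}"

definition cohort :: "nat \<Rightarrow> (nat \<Rightarrow> nat) \<Rightarrow> nat \<Rightarrow> nat set" where
  "cohort C \<sigma> r = \<sigma> ` {r * C..<r * C + C}"

definition avg :: "'w set \<Rightarrow> ('w \<Rightarrow> real) \<Rightarrow> real" where
  "avg \<Omega> F = (\<Sum>w\<in>\<Omega>. F w) / real (card \<Omega>)"

text \<open>gr m j is the gradient of f_m^j.  Local iterate x^{r,j}_{m,t} for client m
started at x with data permutation p.\<close>
primrec local_iter :: "(nat \<Rightarrow> nat \<Rightarrow> 'a::real_vector \<Rightarrow> 'a) \<Rightarrow> real \<Rightarrow> (nat \<Rightarrow> nat) \<Rightarrow> nat \<Rightarrow> 'a \<Rightarrow> nat \<Rightarrow> 'a" where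
  "local_iter gr \<gamma> p m x 0 = x"
| "local_iter gr \<gamma> p m x (Suc j) =
     local_iter gr \<gamma> p m x j - \<gamma> *\<^sub>R gr m (p j) (local_iter gr \<gamma> p m x j)"

primrec round_iter :: "(nat \<Rightarrow> nat \<Rightarrow> 'a::real_vector \<Rightarrow> 'a) \<Rightarrow> real \<Rightarrow> real \<Rightarrow> nat \<Rightarrow> nat \<Rightarrow>
    (nat \<Rightarrow> nat) \<times> (nat \<Rightarrow> nat \<Rightarrow> nat) \<Rightarrow> 'a \<Rightarrow> nat \<Rightarrow> 'a" where
  "round_iter gr \<gamma> \<eta> N C \<omega> x 0 = x"
| "round_iter gr \<gamma> \<eta> N C \<omega> x (Suc r) =
     (let y = round_iter gr \<gamma> \<eta> N C \<omega> x r;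
          g = (1 / real C) *\<^sub>R (\<Sum>m\<in>cohort C (fst \<omega>) r.
                 (1 / (\<gamma> * real N)) *\<^sub>R (y - local_iter gr \<gamma> (snd \<omega> m) m y N))
      in y - \<eta> *\<^sub>R g)"

definition epoch_step :: "(nat \<Rightarrow> nat \<Rightarrow> 'a::real_vector \<Rightarrow> 'a) \<Rightarrow> real \<Rightarrow> real \<Rightarrow> real \<Rightarrow> nat \<Rightarrow> nat \<Rightarrow> nat \<Rightarrow>
    (nat \<Rightarrow> nat) \<times> (nat \<Rightarrow> nat \<Rightarrow> nat) \<Rightarrow> 'a \<Rightarrow> 'a" where
  "epoch_step gr \<gamma> \<eta> \<theta> N C R \<omega> x =
     x - \<theta> *\<^sub>R ((1 / (\<eta> * real R)) *\<^sub>R (x - round_iter gr \<gamma> \<eta> N C \<omega> x R))"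

primrec rrcli :: "(nat \<Rightarrow> nat \<Rightarrow> 'a::real_vector \<Rightarrow> 'a) \<Rightarrow> real \<Rightarrow> real \<Rightarrow> real \<Rightarrow> nat \<Rightarrow> nat \<Rightarrow> nat \<Rightarrow>
    (nat \<Rightarrow> (nat \<Rightarrow> nat) \<times> (nat \<Rightarrow> nat \<Rightarrow> nat)) \<Rightarrow> 'a \<Rightarrow> nat \<Rightarrow> 'a" where
  "rrcli gr \<gamma> \<eta> \<theta> N C R ws x0 0 = x0"
| "rrcli gr \<gamma> \<eta> \<theta> N C R ws x0 (Suc t) =
     epoch_step gr \<gamma> \<eta> \<theta> N C R (ws t) (rrcli gr \<gamma> \<eta> \<theta> N C R ws x0 t)"

primrec star_local :: "(nat \<Rightarrow> nat \<Rightarrow> 'a::real_vector \<Rightarrow> 'a) \<Rightarrow> real \<Rightarrow> 'a \<Rightarrow> (nat \<Rightarrow> nat) \<Rightarrow> nat \<Rightarrow> 'a \<Rightarrow> nat \<Rightarrow> 'a" where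
  "star_local gr \<gamma> xs p m x 0 = x"
| "star_local gr \<gamma> xs p m x (Suc j) = star_local gr \<gamma> xs p m x j - \<gamma> *\<^sub>R gr m (p j) xs"

primrec star_round :: "(nat \<Rightarrow> nat \<Rightarrow> 'a::real_vector \<Rightarrow> 'a) \<Rightarrow> real \<Rightarrow> 'a \<Rightarrow> nat \<Rightarrow> nat \<Rightarrow>
    (nat \<Rightarrow> nat) \<times> (nat \<Rightarrow> nat \<Rightarrow> nat) \<Rightarrow> nat \<Rightarrow> 'a" where
  "star_round gr \<gamma> xs N C \<omega> 0 = xs"
| "star_round gr \<gamma> xs N C \<omega> (Suc r) =
     (1 / real C) *\<^sub>R (\<Sum>m\<in>cohort C (fst \<omega>) r.
        star_local gr \<gamma> xs (snd \<omega> m) m (star_round gr \<gamma> xs N C \<omega> r) N)"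

text \<open>sigma^2_{m,DS}(t,r,j): (1/gamma^2) times the expectation of
D_{f_m^{pi_m^j}}(x^{r,j}_{m,star}, x_star), taken over the meta-epoch outcome
conditionally on the event that client m belongs to the r-th cohort
(the only event on which x^{r,j}_{m,star} is defined).  The law of the meta-epoch
outcome is the same uniform law for every t, so the quantity does not depend on t.\<close>
definition sigma2_DS :: "(nat \<Rightarrow> nat \<Rightarrow> 'a::real_inner \<Rightarrow> real) \<Rightarrow> (nat \<Rightarrow> nat \<Rightarrow> 'a \<Rightarrow> 'a) \<Rightarrow> real \<Rightarrow> 'a \<Rightarrow>
    nat \<Rightarrow> nat \<Rightarrow> nat \<Rightarrow> nat \<Rightarrow> nat \<Rightarrow> nat \<Rightarrow> real" where
  "sigma2_DS f gr \<gamma> xs M N C m r j =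
     (1 / \<gamma>\<^sup>2) * avg {\<omega> \<in> epoch_outcomes M N. m \<in> cohort C (fst \<omega>) r}
        (\<lambda>\<omega>. bregman (f m (snd \<omega> m j)) (gr m (snd \<omega> m j))
                (star_local gr \<gamma> xs (snd \<omega> m) m (star_round gr \<gamma> xs N C \<omega> r) j) xs)"

end

(* Compare every local step x - gamma grad f(x) with the step x' - gamma grad f(x_star) of the
   star sequence.  Strong convexity together with co-coercivity of L-smooth convex functions
   makes this comparison a (1 - gamma mu)-contraction up to the term 2 gamma D(x', x_star), and
   averaging over a cohort keeps the contraction by convexity of the squared norm.  With
   eta = gamma N and theta = eta R a meta-epoch is exactly the composition of its R rounds, and
   because x_star is stationary the star sequence is back at x_star after a meta-epoch.  Hence
   E |x_(t+1) - x_star|^2 <= (1 - gamma mu)^(NR) E |x_t - x_star|^2 + E[noise], where the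
   expected noise is a geometric sum of Bregman terms, each at most gamma^2 times the maximal
   sigma^2_DS; summing the geometric series with ratio 1 - gamma mu produces 2 gamma^2 / mu. *)

theory Submission
  imports Defs
begin

section \<open>Smooth strongly convex functions\<close>

lemma GDERIV_along_line:
  fixes h :: "'a::real_inner \<Rightarrow> real"
  assumes "GDERIV h (x + t *\<^sub>R d) :> D"
  shows "((\<lambda>s. h (x + s *\<^sub>R d)) has_real_derivative inner d D) (at t)"
proof -
  have line: "((\<lambda>s. x + s *\<^sub>R d) has_derivative (\<lambda>s. s *\<^sub>R d)) (at t)"
    by (auto intro!: derivative_eq_intros)
  have "(h has_derivative (\<lambda>v. inner v D)) (at (x + t *\<^sub>R d))"
    using assms by (simp add: gderiv_def)
  from has_derivative_compose[OF line this] show ?thesis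
    unfolding has_field_derivative_def by (rule has_derivative_eq_rhs) (auto simp: fun_eq_iff)
qed

lemma L_smooth_descent:
  fixes h :: "'a::real_inner \<Rightarrow> real"
  assumes grad: "\<And>z. GDERIV h z :> g z" and smooth: "L_smooth L g"
  shows "h y \<le> h x + inner (g x) (y - x) + L / 2 * (norm (y - x))\<^sup>2"
proof -
  define d where "d = y - x"
  define \<phi> where "\<phi> t = t * inner (g x) d + L / 2 * t\<^sup>2 * (norm d)\<^sup>2 - h (x + t *\<^sub>R d)" for t
  have "\<phi> 0 \<le> \<phi> 1"
  proof (rule DERIV_nonneg_imp_nondecreasing[of 0 1])
    fix t :: real
    assume t: "0 \<le> t" "t \<le> 1"
    define \<phi>' where "\<phi>' = inner (g x) d + L * t * (norm d)\<^sup>2 - inner d (g (x + t *\<^sub>R d))"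
    have "(\<phi> has_real_derivative \<phi>') (at t)"
      unfolding \<phi>_def \<phi>'_def
      by (auto intro!: derivative_eq_intros GDERIV_along_line grad simp: power2_eq_square)
    moreover have "inner (g (x + t *\<^sub>R d) - g x) d \<le> L * t * (norm d)\<^sup>2"
    proof -
      have "inner (g (x + t *\<^sub>R d) - g x) d \<le> norm (g (x + t *\<^sub>R d) - g x) * norm d"
        by (rule norm_cauchy_schwarz)
      also have "\<dots> \<le> L * norm (t *\<^sub>R d) * norm d"
        using smooth unfolding L_smooth_def
        by (intro mult_right_mono) (metis add_diff_cancel_left', simp)
      finally show ?thesis
        using t by (simp add: power2_eq_square mult.assoc)
    qed
    then have "0 \<le> \<phi>'"
      unfolding \<phi>'_def by (simp add: inner_diff_left inner_commute[of d])
    ultimately show "\<exists>y. (\<phi> has_real_derivative y) (at t) \<and> 0 \<le> y"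
      by blast
  qed simp
  then show ?thesis
    unfolding \<phi>_def d_def by simp
qed

lemma bregman_ge_strongly_convex:
  assumes "strongly_convex_grad \<mu> h g"
  shows "\<mu> / 2 * (norm (x - y))\<^sup>2 \<le> bregman h g x y"
proof -
  have "inner (g y) (x - y) \<le> - (h y - h x + \<mu> / 2 * (norm (y - x))\<^sup>2)"
    using assms unfolding strongly_convex_grad_def by blast
  then show ?thesis
    unfolding bregman_def by (simp add: norm_minus_commute)
qed

lemma bregman_nonneg:
  assumes "strongly_convex_grad \<mu> h g" and "0 \<le> \<mu>"
  shows "0 \<le> bregman h g x y"
proof -
  have "0 \<le> \<mu> / 2 * (norm (x - y))\<^sup>2"
    using assms(2) by simp
  also have "\<dots> \<le> bregman h g x y"
    by (rule bregman_ge_strongly_convex[OF assms(1)])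
  finally show ?thesis .
qed

lemma bregman_ge_norm_grad_diff:
  fixes h :: "'a::real_inner \<Rightarrow> real"
  assumes grad: "\<And>z. GDERIV h z :> g z" and smooth: "L_smooth L g" and L: "0 < L"
    and sconv: "strongly_convex_grad \<mu> h g" and "0 \<le> \<mu>"
  shows "(norm (g x - g y))\<^sup>2 / (2 * L) \<le> bregman h g x y"
proof -
  \<comment> \<open>Evaluate the descent bound from x and the convexity bound from y at the same point z.\<close>
  define u where "u = g x - g y"
  define z where "z = x - (1 / L) *\<^sub>R u"
  have "h z \<le> h x + inner (g x) (z - x) + L / 2 * (norm (z - x))\<^sup>2"
    by (rule L_smooth_descent[OF grad smooth])
  also have "inner (g x) (z - x) = - (1 / L) * inner (g x) u"
    by (simp add: z_def)
  also have "L / 2 * (norm (z - x))\<^sup>2 = (norm u)\<^sup>2 / (2 * L)"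
    using L by (simp add: z_def power2_eq_square)
  finally have descent: "h z \<le> h x - (1 / L) * inner (g x) u + (norm u)\<^sup>2 / (2 * L)"
    by simp
  have convex: "h y + inner (g y) (x - y) - (1 / L) * inner (g y) u \<le> h z"
    using bregman_nonneg[OF sconv \<open>0 \<le> \<mu>\<close>, of z y]
    by (simp add: bregman_def z_def inner_diff_right)
  have "inner (g x) u - inner (g y) u = (norm u)\<^sup>2"
    by (simp add: u_def power2_norm_eq_inner inner_diff_left)
  then have gap: "(1 / L) * inner (g x) u - (1 / L) * inner (g y) u = 2 * ((norm u)\<^sup>2 / (2 * L))"
    by (simp add: diff_divide_distrib[symmetric])
  show ?thesis
    unfolding bregman_def u_def[symmetric] using descent convex gap by linarith
qed

lemma gradient_step_contraction:
  fixes h :: "'a::real_inner \<Rightarrow> real"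
  assumes grad: "\<And>z. GDERIV h z :> g z" and smooth: "L_smooth L g"
    and sconv: "strongly_convex_grad \<mu> h g" and "0 \<le> \<mu>"
    and \<gamma>: "0 < \<gamma>" "\<gamma> \<le> 1 / L"
  shows "(norm ((x - \<gamma> *\<^sub>R g x) - (y - \<gamma> *\<^sub>R g z)))\<^sup>2
         \<le> (1 - \<gamma> * \<mu>) * (norm (x - y))\<^sup>2 + 2 * \<gamma> * bregman h g y z"
proof -
  have "0 < 1 / L"
    using \<gamma> by linarith
  then have L: "0 < L"
    by simp
  define d where "d = x - y"
  define u where "u = g x - g z"
  have expand: "(norm ((x - \<gamma> *\<^sub>R g x) - (y - \<gamma> *\<^sub>R g z)))\<^sup>2
      = (norm d)\<^sup>2 - 2 * \<gamma> * inner u d + \<gamma>\<^sup>2 * (norm u)\<^sup>2"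
    unfolding d_def u_def power2_norm_eq_inner
    by (simp add: inner_diff_left inner_diff_right inner_commute power2_eq_square algebra_simps)
  have three_point: "inner u d = bregman h g y x + bregman h g x z - bregman h g y z"
    unfolding u_def d_def bregman_def by (simp add: inner_diff_left inner_diff_right inner_commute)
  have strong: "\<mu> / 2 * (norm d)\<^sup>2 \<le> bregman h g y x"
    using bregman_ge_strongly_convex[OF sconv, of y x] by (simp add: d_def norm_minus_commute)
  have cocoercive: "\<gamma> * (norm u)\<^sup>2 \<le> 2 * bregman h g x z"
  proof -
    have "\<gamma> * (norm u)\<^sup>2 \<le> (1 / L) * (norm u)\<^sup>2"
      using \<gamma> by (intro mult_right_mono) auto
    also have "\<dots> \<le> 2 * bregman h g x z"
      using bregman_ge_norm_grad_diff[OF grad smooth L sconv \<open>0 \<le> \<mu>\<close>, of x z] L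
      by (simp add: u_def field_simps)
    finally show ?thesis .
  qed
  have "\<gamma> * \<mu> * (norm d)\<^sup>2 \<le> 2 * \<gamma> * bregman h g y x"
    using mult_left_mono[OF strong, of "2 * \<gamma>"] \<gamma> by (simp add: algebra_simps)
  moreover have "\<gamma>\<^sup>2 * (norm u)\<^sup>2 \<le> 2 * \<gamma> * bregman h g x z"
    using mult_left_mono[OF cocoercive, of \<gamma>] \<gamma> by (simp add: power2_eq_square algebra_simps)
  moreover have "(1 - \<gamma> * \<mu>) * (norm d)\<^sup>2 = (norm d)\<^sup>2 - \<gamma> * \<mu> * (norm d)\<^sup>2"
    by (simp add: algebra_simps)
  ultimately show ?thesis
    unfolding expand three_point d_def[symmetric] right_diff_distrib distrib_left by linarith
qed

lemma strongly_convex_le_L_smooth: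
  fixes h :: "'a::euclidean_space \<Rightarrow> real"
  assumes sconv: "strongly_convex_grad \<mu> h g" and smooth: "L_smooth L g"
  shows "\<mu> \<le> L"
proof -
  obtain v :: 'a where "v \<in> Basis"
    using nonempty_Basis by blast
  then have v: "norm v = 1"
    by simp
  have "inner (g v) (0 - v) \<le> - (h v - h 0 + \<mu> / 2 * (norm (v - 0))\<^sup>2)"
    and "inner (g 0) (v - 0) \<le> - (h 0 - h v + \<mu> / 2 * (norm (0 - v))\<^sup>2)"
    using sconv unfolding strongly_convex_grad_def by blast+
  then have "\<mu> \<le> inner (g v - g 0) v"
    using v by (simp add: inner_diff_left)
  also have "\<dots> \<le> norm (g v - g 0) * norm v"
    by (rule norm_cauchy_schwarz)
  also have "\<dots> \<le> L"
    using smooth v unfolding L_smooth_def by (metis diff_zero mult.right_neutral)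
  finally show ?thesis .
qed

lemma GDERIV_zero_at_minimum:
  assumes "GDERIV h x :> D" and "\<And>y. h x \<le> h y"
  shows "D = 0"
proof -
  have "(\<lambda>v. inner v D) = (\<lambda>v. 0)"
    using assms unfolding gderiv_def by (intro has_derivative_local_min) auto
  then have "inner D D = 0"
    by metis
  then show ?thesis
    by simp
qed

lemma sum_gradients_zero_at_minimum:
  assumes "\<And>i. i \<in> I \<Longrightarrow> GDERIV (h i) x :> D i"
    and "\<And>y. (\<Sum>i\<in>I. h i x) \<le> (\<Sum>i\<in>I. h i y)"
  shows "(\<Sum>i\<in>I. D i) = 0"
proof (rule GDERIV_zero_at_minimum)
  show "GDERIV (\<lambda>y. \<Sum>i\<in>I. h i y) x :> (\<Sum>i\<in>I. D i)"
    using assms(1) unfolding gderiv_def inner_sum_right by (rule has_derivative_sum)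
qed (use assms(2) in auto)

lemma linear_recurrence_le:
  fixes e b :: "nat \<Rightarrow> real"
  assumes "0 \<le> q" and step: "\<And>n. n < k \<Longrightarrow> e (Suc n) \<le> q * e n + b n"
  shows "e k \<le> q ^ k * e 0 + (\<Sum>j<k. q ^ (k - Suc j) * b j)"
  using step
proof (induction k)
  case (Suc k)
  have "e (Suc k) \<le> q * e k + b k"
    using Suc.prems by simp
  also have "\<dots> \<le> q * (q ^ k * e 0 + (\<Sum>j<k. q ^ (k - Suc j) * b j)) + b k"
    using Suc \<open>0 \<le> q\<close> by (simp add: mult_left_mono)
  also have "\<dots> = q ^ Suc k * e 0 + ((\<Sum>j<k. q * q ^ (k - Suc j) * b j) + b k)"
    by (simp add: algebra_simps sum_distrib_left)
  also have "(\<Sum>j<k. q * q ^ (k - Suc j) * b j) = (\<Sum>j<k. q ^ (Suc k - Suc j) * b j)"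
    by (intro sum.cong refl) (metis Suc_diff_Suc diff_Suc_Suc lessThan_iff power_Suc)
  finally show ?case
    by simp
qed simp

lemma one_minus_mult_sum_power_rev:
  fixes x :: "'b::comm_ring_1"
  shows "(1 - x) * (\<Sum>j<n. x ^ (n - Suc j)) = 1 - x ^ n"
  by (simp add: sum.nat_diff_reindex one_diff_power_eq)

lemma power2_norm_average_le:
  fixes v :: "'b \<Rightarrow> 'a::real_normed_vector"
  shows "(norm ((1 / real (card A)) *\<^sub>R (\<Sum>m\<in>A. v m)))\<^sup>2
         \<le> (1 / real (card A)) * (\<Sum>m\<in>A. (norm (v m))\<^sup>2)"
proof (cases "card A = 0")
  case False
  have "(norm (\<Sum>m\<in>A. v m))\<^sup>2 \<le> (\<Sum>m\<in>A. norm (v m))\<^sup>2"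
    by (intro power_mono norm_sum) auto
  also have "\<dots> \<le> real (card A) * (\<Sum>m\<in>A. (norm (v m))\<^sup>2)"
    using sum_squared_le_sum_of_squares[of "\<lambda>m. norm (v m)" A] False by (simp add: mult.commute)
  finally show ?thesis
    using False by (simp add: power_divide power2_eq_square field_simps)
qed simp

lemma avg_sum: "avg X (\<lambda>w. \<Sum>i\<in>I. F i w) = (\<Sum>i\<in>I. avg X (F i))"
  unfolding avg_def by (subst sum.swap) (simp add: sum_divide_distrib)

lemma avg_mult_left: "avg X (\<lambda>w. c * F w) = c * avg X F"
  unfolding avg_def by (simp add: sum_distrib_left)

lemma avg_mono: "(\<And>w. w \<in> X \<Longrightarrow> F w \<le> G w) \<Longrightarrow> avg X F \<le> avg X G"
  unfolding avg_def by (intro divide_right_mono sum_mono) auto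

lemma avg_add: "avg X (\<lambda>w. F w + G w) = avg X F + avg X G"
  unfolding avg_def by (simp add: sum.distrib add_divide_distrib)

lemma avg_const: "finite X \<Longrightarrow> X \<noteq> {} \<Longrightarrow> avg X (\<lambda>_. c) = c"
  unfolding avg_def by simp

lemma sum_eq_card_mult_avg: "finite X \<Longrightarrow> (\<Sum>w\<in>X. F w) = real (card X) * avg X F"
  unfolding avg_def by (cases "X = {}") auto

lemma avg_PiE_lessThan_Suc:
  "avg (PiE {..<Suc T} (\<lambda>_. \<Omega>)) F
     = avg \<Omega> (\<lambda>w. avg (PiE {..<T} (\<lambda>_. \<Omega>)) (\<lambda>ws. F (ws(T := w))))"
proof -
  let ?P = "PiE {..<T} (\<lambda>_. \<Omega>)"
  have split: "PiE {..<Suc T} (\<lambda>_. \<Omega>) = (\<lambda>(w, ws). ws(T := w)) ` (\<Omega> \<times> ?P)"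
    unfolding lessThan_Suc by (rule PiE_insert_eq)
  have inj: "inj_on (\<lambda>(w, ws). ws(T := w)) (\<Omega> \<times> ?P)"
    by (rule inj_combinator) simp
  have "(\<Sum>ws\<in>PiE {..<Suc T} (\<lambda>_. \<Omega>). F ws) = (\<Sum>w\<in>\<Omega>. \<Sum>ws\<in>?P. F (ws(T := w)))"
    unfolding split sum.reindex[OF inj] sum.cartesian_product by (simp add: case_prod_beta)
  moreover have "card (PiE {..<Suc T} (\<lambda>_. \<Omega>)) = card \<Omega> * card ?P"
    unfolding split card_image[OF inj] by (rule card_cartesian_product)
  ultimately show ?thesis
    unfolding avg_def by (simp add: sum_divide_distrib[symmetric] mult.commute)
qed

lemma finite_epoch_outcomes: "finite (epoch_outcomes M N)"
proof (rule finite_subset)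
  show "epoch_outcomes M N \<subseteq> {\<sigma>. \<sigma> permutes {..<M}} \<times>
          {\<pi>. \<forall>m. (m \<in> {..<M} \<longrightarrow> \<pi> m \<in> {p. p permutes {..<N}}) \<and> (m \<notin> {..<M} \<longrightarrow> \<pi> m = id)}"
    unfolding epoch_outcomes_def by auto
  show "finite ({\<sigma>. \<sigma> permutes {..<M}} \<times>
          {\<pi>. \<forall>m. (m \<in> {..<M} \<longrightarrow> \<pi> m \<in> {p. p permutes {..<N}}) \<and> (m \<notin> {..<M} \<longrightarrow> \<pi> m = id)})"
    by (intro finite_cartesian_product finite_set_of_finite_funs finite_permutations) auto
qed

lemma epoch_outcomes_nonempty: "epoch_outcomes M N \<noteq> {}"
proof -
  have "(id, \<lambda>_. id) \<in> epoch_outcomes M N"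
    unfolding epoch_outcomes_def by (auto simp: permutes_id)
  then show ?thesis
    by blast
qed

lemma card_cohort: "inj \<sigma> \<Longrightarrow> card (cohort C \<sigma> r) = C"
  unfolding cohort_def by (simp add: card_image inj_on_subset)

lemma cohort_subset:
  assumes "\<sigma> permutes {..<C * R}" and "r < R"
  shows "cohort C \<sigma> r \<subseteq> {..<C * R}"
proof -
  have "r * C + C \<le> C * R"
    using assms(2) by (metis add.commute less_eq_Suc_le mult.commute mult_Suc mult_le_mono1)
  then have "{r * C..<r * C + C} \<subseteq> {..<C * R}"
    by auto
  then show ?thesis
    unfolding cohort_def using permutes_image[OF assms(1)] by (metis image_mono)
qed

lemma sum_cohorts:
  assumes "\<sigma> permutes {..<C * R}"
  shows "(\<Sum>r<R. \<Sum>m\<in>cohort C \<sigma> r. H m) = (\<Sum>m<C * R. H m)"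
proof -
  have inj: "inj \<sigma>"
    using assms by (rule permutes_inj)
  have "(\<Sum>r<R. \<Sum>m\<in>cohort C \<sigma> r. H m) = (\<Sum>r<R. \<Sum>i\<in>{r * C..<r * C + C}. H (\<sigma> i))"
    unfolding cohort_def by (simp add: sum.reindex[OF inj_on_subset[OF inj]])
  also have "\<dots> = (\<Sum>i<C * R. H (\<sigma> i))"
    by (simp add: sum.nat_group mult.commute)
  also have "\<dots> = (\<Sum>m<C * R. H m)"
    using sum.permute[OF assms, of H] by simp
  finally show ?thesis .
qed

lemma rrcli_cong:
  "(\<And>t. t < n \<Longrightarrow> ws t = ws' t) \<Longrightarrow>
     rrcli gr \<gamma> \<eta> \<theta> N C R ws x0 n = rrcli gr \<gamma> \<eta> \<theta> N C R ws' x0 n"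
  by (induction n) auto

section \<open>One meta-epoch of RR-CLI\<close>

lemma star_local_eq: "star_local gr \<gamma> xs p m y n = y - \<gamma> *\<^sub>R (\<Sum>j<n. gr m (p j) xs)"
  by (induction n) (simp_all add: algebra_simps)

locale rr_cli =
  fixes f :: "nat \<Rightarrow> nat \<Rightarrow> 'a::euclidean_space \<Rightarrow> real"
    and gr :: "nat \<Rightarrow> nat \<Rightarrow> 'a \<Rightarrow> 'a"
    and M N C R :: nat
    and L \<mu> \<gamma> \<eta> \<theta> :: real
    and xs :: 'a
  assumes M_eq: "M = C * R" and C_pos: "0 < C" and R_pos: "0 < R" and N_pos: "0 < N"
    and grad: "\<And>m j x. m < M \<Longrightarrow> j < N \<Longrightarrow> GDERIV (f m j) x :> gr m j x"
    and smooth: "\<And>m j. m < M \<Longrightarrow> j < N \<Longrightarrow> L_smooth L (gr m j)"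
    and sconv: "\<And>m j. m < M \<Longrightarrow> j < N \<Longrightarrow> strongly_convex_grad \<mu> (f m j) (gr m j)"
    and mu_pos: "0 < \<mu>"
    and gamma_pos: "0 < \<gamma>" and gamma_le: "\<gamma> \<le> 1 / L"
    and eta_eq: "\<eta> = \<gamma> * real N" and theta_eq: "\<theta> = \<eta> * real R"
    and stationary: "(\<Sum>m<M. \<Sum>j<N. gr m j xs) = 0"
begin

abbreviation \<Omega> :: "((nat \<Rightarrow> nat) \<times> (nat \<Rightarrow> nat \<Rightarrow> nat)) set"
  where "\<Omega> \<equiv> epoch_outcomes M N"

definition q :: real
  where "q = 1 - \<gamma> * \<mu>"

lemma q_nonneg: "0 \<le> q"
proof -
  have "0 < M"
    using M_eq C_pos R_pos by simp
  then have "\<mu> \<le> L"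
    using strongly_convex_le_L_smooth[OF sconv smooth] N_pos by simp
  then have "\<gamma> * \<mu> \<le> \<gamma> * L"
    using gamma_pos by simp
  moreover have "0 < 1 / L"
    using gamma_pos gamma_le by linarith
  then have "\<gamma> * L \<le> 1"
    using gamma_le by (simp add: field_simps)
  ultimately have "\<gamma> * \<mu> \<le> 1"
    by linarith
  then show ?thesis
    by (simp add: q_def)
qed

lemma outcome_cohorts_permutes: "\<omega> \<in> \<Omega> \<Longrightarrow> fst \<omega> permutes {..<C * R}"
  unfolding epoch_outcomes_def M_eq by auto

lemma outcome_data_permutes: "\<omega> \<in> \<Omega> \<Longrightarrow> m < M \<Longrightarrow> snd \<omega> m permutes {..<N}"
  unfolding epoch_outcomes_def by auto

lemma outcome_data_index_lt: "\<omega> \<in> \<Omega> \<Longrightarrow> m < M \<Longrightarrow> j < N \<Longrightarrow> snd \<omega> m j < N"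
  using outcome_data_permutes permutes_in_image by fastforce

lemma card_outcome_cohort: "\<omega> \<in> \<Omega> \<Longrightarrow> card (cohort C (fst \<omega>) r) = C"
  by (rule card_cohort[OF permutes_inj[OF outcome_cohorts_permutes]])

lemma outcome_cohort_lt: "\<omega> \<in> \<Omega> \<Longrightarrow> r < R \<Longrightarrow> m \<in> cohort C (fst \<omega>) r \<Longrightarrow> m < M"
  using cohort_subset[OF outcome_cohorts_permutes] M_eq by fastforce

lemma local_iter_dist_le:
  assumes m: "m < M" and p: "\<And>j. j < N \<Longrightarrow> p j < N"
  shows "(norm (local_iter gr \<gamma> p m x N - star_local gr \<gamma> xs p m y N))\<^sup>2
     \<le> q ^ N * (norm (x - y))\<^sup>2 + (\<Sum>j<N. q ^ (N - Suc j) *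
          (2 * \<gamma> * bregman (f m (p j)) (gr m (p j)) (star_local gr \<gamma> xs p m y j) xs))"
proof -
  have "(norm (local_iter gr \<gamma> p m x (Suc n) - star_local gr \<gamma> xs p m y (Suc n)))\<^sup>2
      \<le> q * (norm (local_iter gr \<gamma> p m x n - star_local gr \<gamma> xs p m y n))\<^sup>2
        + 2 * \<gamma> * bregman (f m (p n)) (gr m (p n)) (star_local gr \<gamma> xs p m y n) xs"
    if "n < N" for n
  proof -
    have j: "p n < N"
      using p[OF that] .
    show ?thesis
      using gradient_step_contraction[OF grad[OF m j] smooth[OF m j] sconv[OF m j] _ gamma_pos gamma_le]
        mu_pos
      by (simp add: q_def)
  qed
  then show ?thesis
    using linear_recurrence_le[OF q_nonneg, of N
        "\<lambda>n. (norm (local_iter gr \<gamma> p m x n - star_local gr \<gamma> xs p m y n))\<^sup>2"] by simp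
qed

lemma round_iter_Suc_eq_average:
  assumes "\<omega> \<in> \<Omega>"
  shows "round_iter gr \<gamma> \<eta> N C \<omega> x (Suc r) = (1 / real C) *\<^sub>R
     (\<Sum>m\<in>cohort C (fst \<omega>) r. local_iter gr \<gamma> (snd \<omega> m) m (round_iter gr \<gamma> \<eta> N C \<omega> x r) N)"
proof -
  define y where "y = round_iter gr \<gamma> \<eta> N C \<omega> x r"
  define A where "A = cohort C (fst \<omega>) r"
  define l where "l m = local_iter gr \<gamma> (snd \<omega> m) m y N" for m
  have "\<eta> \<noteq> 0"
    using eta_eq gamma_pos N_pos by simp
  then have "round_iter gr \<gamma> \<eta> N C \<omega> x (Suc r) = y - (1 / real C) *\<^sub>R (\<Sum>m\<in>A. y - l m)"
    by (simp add: Let_def y_def A_def l_def eta_eq scaleR_sum_right[symmetric])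
  also have "(\<Sum>m\<in>A. y - l m) = real C *\<^sub>R y - (\<Sum>m\<in>A. l m)"
    using card_outcome_cohort[OF assms] by (simp add: A_def sum_subtractf sum_constant_scaleR)
  finally show ?thesis
    using C_pos by (simp add: A_def l_def y_def scaleR_diff_right)
qed

lemma star_round_eq:
  assumes "\<omega> \<in> \<Omega>" and "r \<le> R"
  shows "star_round gr \<gamma> xs N C \<omega> r
     = xs - (\<gamma> / real C) *\<^sub>R (\<Sum>r'<r. \<Sum>m\<in>cohort C (fst \<omega>) r'. \<Sum>j<N. gr m j xs)"
  using assms(2)
proof (induction r)
  case (Suc r)
  define A where "A = cohort C (fst \<omega>) r"
  have data_sum: "(\<Sum>j<N. gr m (snd \<omega> m j) xs) = (\<Sum>j<N. gr m j xs)" if "m \<in> A" for m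
  proof -
    have "m < M"
      using outcome_cohort_lt[OF assms(1), of r m] that Suc.prems by (simp add: A_def Suc_le_eq)
    then show ?thesis
      using sum.permute[OF outcome_data_permutes[OF assms(1)], of m "\<lambda>j. gr m j xs"]
      by (simp add: comp_def)
  qed
  have "star_round gr \<gamma> xs N C \<omega> (Suc r)
      = (1 / real C) *\<^sub>R (\<Sum>m\<in>A. star_round gr \<gamma> xs N C \<omega> r - \<gamma> *\<^sub>R (\<Sum>j<N. gr m j xs))"
    by (simp add: A_def[symmetric] star_local_eq data_sum cong: sum.cong)
  also have "\<dots> = star_round gr \<gamma> xs N C \<omega> r - (\<gamma> / real C) *\<^sub>R (\<Sum>m\<in>A. \<Sum>j<N. gr m j xs)"
    using C_pos card_outcome_cohort[OF assms(1)]
    by (simp add: A_def sum_subtractf sum_constant_scaleR scaleR_diff_right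
        scaleR_sum_right[symmetric])
  finally show ?case
    using Suc by (simp add: A_def scaleR_right_distrib algebra_simps del: star_round.simps)
qed simp

text \<open>Over a full meta-epoch every client is visited once and sums its gradients at xs over a
  whole permutation of its data, so the star sequence comes back to the stationary point xs.\<close>
lemma star_round_R:
  assumes "\<omega> \<in> \<Omega>"
  shows "star_round gr \<gamma> xs N C \<omega> R = xs"
  using star_round_eq[OF assms order.refl] stationary M_eq
    sum_cohorts[OF outcome_cohorts_permutes[OF assms], of "\<lambda>m. \<Sum>j<N. gr m j xs"]
  by simp

definition star_bregman :: "(nat \<Rightarrow> nat) \<times> (nat \<Rightarrow> nat \<Rightarrow> nat) \<Rightarrow> nat \<Rightarrow> nat \<Rightarrow> nat \<Rightarrow> real"
  where "star_bregman \<omega> m r j = bregman (f m (snd \<omega> m j)) (gr m (snd \<omega> m j))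
     (star_local gr \<gamma> xs (snd \<omega> m) m (star_round gr \<gamma> xs N C \<omega> r) j) xs"

definition round_noise :: "(nat \<Rightarrow> nat) \<times> (nat \<Rightarrow> nat \<Rightarrow> nat) \<Rightarrow> nat \<Rightarrow> real"
  where "round_noise \<omega> r = 2 * \<gamma> / real C *
     (\<Sum>j<N. q ^ (N - Suc j) * (\<Sum>m\<in>cohort C (fst \<omega>) r. star_bregman \<omega> m r j))"

lemma round_dist_le:
  assumes "\<omega> \<in> \<Omega>" and "r < R"
  shows "(norm (round_iter gr \<gamma> \<eta> N C \<omega> x (Suc r) - star_round gr \<gamma> xs N C \<omega> (Suc r)))\<^sup>2
    \<le> q ^ N * (norm (round_iter gr \<gamma> \<eta> N C \<omega> x r - star_round gr \<gamma> xs N C \<omega> r))\<^sup>2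
       + round_noise \<omega> r"
proof -
  define y where "y = round_iter gr \<gamma> \<eta> N C \<omega> x r"
  define z where "z = star_round gr \<gamma> xs N C \<omega> r"
  define A where "A = cohort C (fst \<omega>) r"
  have card_A: "card A = C"
    unfolding A_def by (rule card_outcome_cohort[OF assms(1)])
  have "round_iter gr \<gamma> \<eta> N C \<omega> x (Suc r) - star_round gr \<gamma> xs N C \<omega> (Suc r)
      = (1 / real (card A)) *\<^sub>R
          (\<Sum>m\<in>A. local_iter gr \<gamma> (snd \<omega> m) m y N - star_local gr \<gamma> xs (snd \<omega> m) m z N)"
    unfolding round_iter_Suc_eq_average[OF assms(1)] card_A
    by (simp add: y_def z_def A_def sum_subtractf scaleR_diff_right)
  then have "(norm (round_iter gr \<gamma> \<eta> N C \<omega> x (Suc r) - star_round gr \<gamma> xs N C \<omega> (Suc r)))\<^sup>2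
      \<le> (1 / real (card A)) *
          (\<Sum>m\<in>A. (norm (local_iter gr \<gamma> (snd \<omega> m) m y N - star_local gr \<gamma> xs (snd \<omega> m) m z N))\<^sup>2)"
    by (simp only: power2_norm_average_le)
  also have "\<dots> \<le> (1 / real (card A)) * (\<Sum>m\<in>A. q ^ N * (norm (y - z))\<^sup>2
                     + (\<Sum>j<N. q ^ (N - Suc j) * (2 * \<gamma> * star_bregman \<omega> m r j)))"
  proof (intro mult_left_mono sum_mono)
    fix m
    assume "m \<in> A"
    then have m: "m < M"
      using outcome_cohort_lt[OF assms] by (simp add: A_def)
    show "(norm (local_iter gr \<gamma> (snd \<omega> m) m y N - star_local gr \<gamma> xs (snd \<omega> m) m z N))\<^sup>2
        \<le> q ^ N * (norm (y - z))\<^sup>2 + (\<Sum>j<N. q ^ (N - Suc j) * (2 * \<gamma> * star_bregman \<omega> m r j))"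
      using local_iter_dist_le[OF m outcome_data_index_lt[OF assms(1) m]]
      by (simp add: star_bregman_def z_def)
  qed simp
  also have "\<dots> = q ^ N * (norm (y - z))\<^sup>2 + round_noise \<omega> r"
  proof -
    have "(\<Sum>m\<in>A. \<Sum>j<N. q ^ (N - Suc j) * (2 * \<gamma> * star_bregman \<omega> m r j))
        = real C * round_noise \<omega> r"
      using C_pos
      by (subst sum.swap) (simp add: round_noise_def A_def sum_distrib_left mult.left_commute)
    then show ?thesis
      using C_pos by (simp add: sum.distrib card_A distrib_left)
  qed
  finally show ?thesis
    by (simp add: y_def z_def)
qed

definition epoch_noise :: "(nat \<Rightarrow> nat) \<times> (nat \<Rightarrow> nat \<Rightarrow> nat) \<Rightarrow> real"
  where "epoch_noise \<omega> = (\<Sum>r<R. (q ^ N) ^ (R - Suc r) * round_noise \<omega> r)"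

lemma epoch_step_eq_round_iter:
  "epoch_step gr \<gamma> \<eta> \<theta> N C R \<omega> x = round_iter gr \<gamma> \<eta> N C \<omega> x R"
  using gamma_pos N_pos R_pos by (simp add: epoch_step_def theta_eq eta_eq)

lemma epoch_dist_le:
  assumes "\<omega> \<in> \<Omega>"
  shows "(norm (epoch_step gr \<gamma> \<eta> \<theta> N C R \<omega> x - xs))\<^sup>2
     \<le> q ^ (N * R) * (norm (x - xs))\<^sup>2 + epoch_noise \<omega>"
  using linear_recurrence_le[OF zero_le_power[OF q_nonneg], of R
      "\<lambda>r. (norm (round_iter gr \<gamma> \<eta> N C \<omega> x r - star_round gr \<gamma> xs N C \<omega> r))\<^sup>2"]
    round_dist_le[OF assms] star_round_R[OF assms]
  by (simp add: epoch_step_eq_round_iter epoch_noise_def power_mult)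

section \<open>Expectation over the random permutations\<close>

definition sigma2_max :: real
  where "sigma2_max = Max {sigma2_DS f gr \<gamma> xs M N C m r j | m r j. r < R \<and> m < M \<and> j < N}"

lemma star_bregman_nonneg: "\<omega> \<in> \<Omega> \<Longrightarrow> m < M \<Longrightarrow> j < N \<Longrightarrow> 0 \<le> star_bregman \<omega> m r j"
  unfolding star_bregman_def
  using bregman_nonneg[OF sconv] outcome_data_index_lt mu_pos by simp

lemma sigma2_DS_eq_avg:
  "sigma2_DS f gr \<gamma> xs M N C m r j
     = avg {\<omega> \<in> \<Omega>. m \<in> cohort C (fst \<omega>) r} (\<lambda>\<omega>. star_bregman \<omega> m r j) / \<gamma>\<^sup>2"
  unfolding sigma2_DS_def star_bregman_def by simp

lemma sigma2_DS_le_max: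
  assumes "m < M" and "r < R" and "j < N"
  shows "sigma2_DS f gr \<gamma> xs M N C m r j \<le> sigma2_max"
proof -
  have "{sigma2_DS f gr \<gamma> xs M N C m r j | m r j. r < R \<and> m < M \<and> j < N}
      \<subseteq> (\<lambda>(m, r, j). sigma2_DS f gr \<gamma> xs M N C m r j) ` ({..<M} \<times> {..<R} \<times> {..<N})"
    by force
  then have "finite {sigma2_DS f gr \<gamma> xs M N C m r j | m r j. r < R \<and> m < M \<and> j < N}"
    by (rule finite_subset) simp
  then show ?thesis
    unfolding sigma2_max_def using assms by (intro Max_ge) auto
qed

lemma sigma2_max_nonneg: "0 \<le> sigma2_max"
proof -
  have "0 < M"
    using M_eq C_pos R_pos by simp
  then have "0 \<le> sigma2_DS f gr \<gamma> xs M N C 0 0 0"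
    unfolding sigma2_DS_eq_avg avg_def using N_pos
    by (intro divide_nonneg_nonneg sum_nonneg star_bregman_nonneg) auto
  also have "\<dots> \<le> sigma2_max"
    using \<open>0 < M\<close> R_pos N_pos by (rule sigma2_DS_le_max)
  finally show ?thesis .
qed

lemma sum_outcomes_cohort_swap:
  assumes "r < R"
  shows "(\<Sum>\<omega>\<in>\<Omega>. \<Sum>m\<in>cohort C (fst \<omega>) r. F \<omega> m)
     = (\<Sum>m<M. \<Sum>\<omega>\<in>{\<omega> \<in> \<Omega>. m \<in> cohort C (fst \<omega>) r}. F \<omega> m)"
proof -
  have "cohort C (fst \<omega>) r = {m \<in> {..<M}. m \<in> cohort C (fst \<omega>) r}" if "\<omega> \<in> \<Omega>" for \<omega>
    using outcome_cohort_lt[OF that assms] by auto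
  then have "(\<Sum>\<omega>\<in>\<Omega>. \<Sum>m\<in>cohort C (fst \<omega>) r. F \<omega> m)
      = (\<Sum>\<omega>\<in>\<Omega>. \<Sum>m\<in>{m \<in> {..<M}. m \<in> cohort C (fst \<omega>) r}. F \<omega> m)"
    by (intro sum.cong refl) simp
  also have "\<dots> = (\<Sum>m<M. \<Sum>\<omega>\<in>{\<omega> \<in> \<Omega>. m \<in> cohort C (fst \<omega>) r}. F \<omega> m)"
    using finite_epoch_outcomes by (intro sum.swap_restrict) auto
  finally show ?thesis .
qed

lemma avg_cohort_star_bregman_le:
  assumes "r < R" and "j < N"
  shows "avg \<Omega> (\<lambda>\<omega>. \<Sum>m\<in>cohort C (fst \<omega>) r. star_bregman \<omega> m r j) \<le> real C * \<gamma>\<^sup>2 * sigma2_max"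
proof -
  define \<Omega>\<^sub>m where "\<Omega>\<^sub>m m = {\<omega> \<in> \<Omega>. m \<in> cohort C (fst \<omega>) r}" for m
  have fin: "finite (\<Omega>\<^sub>m m)" for m
    unfolding \<Omega>\<^sub>m_def using finite_epoch_outcomes by simp
  have "(\<Sum>\<omega>\<in>\<Omega>. \<Sum>m\<in>cohort C (fst \<omega>) r. star_bregman \<omega> m r j)
      = (\<Sum>m<M. \<Sum>\<omega>\<in>\<Omega>\<^sub>m m. star_bregman \<omega> m r j)"
    unfolding \<Omega>\<^sub>m_def by (rule sum_outcomes_cohort_swap[OF assms(1)])
  also have "\<dots> = (\<Sum>m<M. real (card (\<Omega>\<^sub>m m)) * avg (\<Omega>\<^sub>m m) (\<lambda>\<omega>. star_bregman \<omega> m r j))"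
    by (simp only: sum_eq_card_mult_avg[OF fin])
  also have "\<dots> = (\<Sum>m<M. real (card (\<Omega>\<^sub>m m)) * \<gamma>\<^sup>2 * sigma2_DS f gr \<gamma> xs M N C m r j)"
    using gamma_pos by (simp add: sigma2_DS_eq_avg \<Omega>\<^sub>m_def)
  also have "\<dots> \<le> (\<Sum>m<M. real (card (\<Omega>\<^sub>m m)) * \<gamma>\<^sup>2 * sigma2_max)"
    using assms by (intro sum_mono mult_left_mono sigma2_DS_le_max) auto
  also have "\<dots> = (\<Sum>m<M. real (card (\<Omega>\<^sub>m m))) * \<gamma>\<^sup>2 * sigma2_max"
    by (simp add: sum_distrib_right)
  also have "(\<Sum>m<M. real (card (\<Omega>\<^sub>m m))) = real (card \<Omega>) * real C"
    using sum_outcomes_cohort_swap[OF assms(1), of "\<lambda>_ _. 1::real"]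
    by (simp add: \<Omega>\<^sub>m_def card_outcome_cohort)
  finally have "(\<Sum>\<omega>\<in>\<Omega>. \<Sum>m\<in>cohort C (fst \<omega>) r. star_bregman \<omega> m r j)
      \<le> real C * \<gamma>\<^sup>2 * sigma2_max * real (card \<Omega>)"
    by (simp add: mult_ac)
  moreover have "0 < card \<Omega>"
    using finite_epoch_outcomes epoch_outcomes_nonempty by (simp add: card_gt_0_iff)
  ultimately show ?thesis
    unfolding avg_def by (simp add: pos_divide_le_eq)
qed

lemma avg_round_noise_le:
  assumes "r < R"
  shows "avg \<Omega> (\<lambda>\<omega>. round_noise \<omega> r) \<le> 2 * \<gamma>\<^sup>2 / \<mu> * sigma2_max * (1 - q ^ N)"
proof -
  have "avg \<Omega> (\<lambda>\<omega>. round_noise \<omega> r) = 2 * \<gamma> / real C *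
      (\<Sum>j<N. q ^ (N - Suc j) * avg \<Omega> (\<lambda>\<omega>. \<Sum>m\<in>cohort C (fst \<omega>) r. star_bregman \<omega> m r j))"
    unfolding round_noise_def by (simp only: avg_mult_left avg_sum)
  also have "\<dots> \<le> 2 * \<gamma> / real C * (\<Sum>j<N. q ^ (N - Suc j) * (real C * \<gamma>\<^sup>2 * sigma2_max))"
    using assms gamma_pos q_nonneg
    by (intro mult_left_mono sum_mono avg_cohort_star_bregman_le) auto
  also have "\<dots> = 2 * \<gamma> / real C * ((\<Sum>j<N. q ^ (N - Suc j)) * (real C * \<gamma>\<^sup>2 * sigma2_max))"
    by (simp only: sum_distrib_right)
  also have "\<dots> = 2 * \<gamma>\<^sup>2 / \<mu> * sigma2_max * ((1 - q) * (\<Sum>j<N. q ^ (N - Suc j)))"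
    using C_pos mu_pos by (simp add: q_def power2_eq_square)
  also have "\<dots> = 2 * \<gamma>\<^sup>2 / \<mu> * sigma2_max * (1 - q ^ N)"
    by (simp add: one_minus_mult_sum_power_rev)
  finally show ?thesis .
qed

lemma avg_epoch_noise_le: "avg \<Omega> epoch_noise \<le> 2 * \<gamma>\<^sup>2 / \<mu> * sigma2_max * (1 - q ^ (N * R))"
proof -
  have "avg \<Omega> epoch_noise = (\<Sum>r<R. (q ^ N) ^ (R - Suc r) * avg \<Omega> (\<lambda>\<omega>. round_noise \<omega> r))"
    unfolding epoch_noise_def[abs_def] by (simp add: avg_sum avg_mult_left)
  also have "\<dots> \<le> (\<Sum>r<R. (q ^ N) ^ (R - Suc r) * (2 * \<gamma>\<^sup>2 / \<mu> * sigma2_max * (1 - q ^ N)))"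
    using q_nonneg by (intro sum_mono mult_left_mono avg_round_noise_le) auto
  also have "\<dots> = 2 * \<gamma>\<^sup>2 / \<mu> * sigma2_max * ((1 - q ^ N) * (\<Sum>r<R. (q ^ N) ^ (R - Suc r)))"
    by (simp add: sum_distrib_left sum_distrib_right mult_ac)
  also have "\<dots> = 2 * \<gamma>\<^sup>2 / \<mu> * sigma2_max * (1 - q ^ (N * R))"
    by (simp add: one_minus_mult_sum_power_rev power_mult)
  finally show ?thesis .
qed

lemma expected_dist_resampled_le:
  "avg (PiE {..<T} (\<lambda>_. \<Omega>)) (\<lambda>ws. (norm (rrcli gr \<gamma> \<eta> \<theta> N C R ws x0 T - xs))\<^sup>2)
     \<le> (q ^ (N * R)) ^ T * (norm (x0 - xs))\<^sup>2
       + 2 * \<gamma>\<^sup>2 / \<mu> * sigma2_max * (1 - (q ^ (N * R)) ^ T)"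
proof (induction T)
  case 0
  then show ?case
    by (simp add: avg_def)
next
  case (Suc T)
  let ?P = "PiE {..<T} (\<lambda>_. \<Omega>)"
  let ?Q = "q ^ (N * R)" and ?K = "2 * \<gamma>\<^sup>2 / \<mu> * sigma2_max"
  let ?e = "\<lambda>ws. (norm (rrcli gr \<gamma> \<eta> \<theta> N C R ws x0 T - xs))\<^sup>2"
  have P: "finite ?P" "?P \<noteq> {}"
    using finite_epoch_outcomes epoch_outcomes_nonempty by (auto simp: finite_PiE PiE_eq_empty_iff)
  have "avg (PiE {..<Suc T} (\<lambda>_. \<Omega>)) (\<lambda>ws. (norm (rrcli gr \<gamma> \<eta> \<theta> N C R ws x0 (Suc T) - xs))\<^sup>2)
      = avg \<Omega> (\<lambda>w. avg ?P (\<lambda>ws. (norm (epoch_step gr \<gamma> \<eta> \<theta> N C R w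
          (rrcli gr \<gamma> \<eta> \<theta> N C R (ws(T := w)) x0 T) - xs))\<^sup>2))"
    by (simp add: avg_PiE_lessThan_Suc)
  also have "\<dots> = avg \<Omega> (\<lambda>w. avg ?P (\<lambda>ws. (norm (epoch_step gr \<gamma> \<eta> \<theta> N C R w
          (rrcli gr \<gamma> \<eta> \<theta> N C R ws x0 T) - xs))\<^sup>2))"
    by (simp add: rrcli_cong[of T "_(T := _)"])
  also have "\<dots> \<le> avg \<Omega> (\<lambda>w. avg ?P (\<lambda>ws. ?Q * ?e ws + epoch_noise w))"
    by (intro avg_mono) (simp add: epoch_dist_le)
  also have "\<dots> = ?Q * avg ?P ?e + avg \<Omega> epoch_noise"
    using finite_epoch_outcomes epoch_outcomes_nonempty P
    by (simp add: avg_add avg_const avg_mult_left)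
  also have "\<dots> \<le> ?Q * (?Q ^ T * (norm (x0 - xs))\<^sup>2 + ?K * (1 - ?Q ^ T)) + ?K * (1 - ?Q)"
    using Suc.IH avg_epoch_noise_le q_nonneg by (intro add_mono mult_left_mono) auto
  also have "\<dots> = ?Q ^ Suc T * (norm (x0 - xs))\<^sup>2 + ?K * (1 - ?Q ^ Suc T)"
    using mu_pos by (simp add: field_simps)
  finally show ?case .
qed

lemma expected_dist_reused_le:
  "avg \<Omega> (\<lambda>\<omega>. (norm (rrcli gr \<gamma> \<eta> \<theta> N C R (\<lambda>_. \<omega>) x0 T - xs))\<^sup>2)
     \<le> (q ^ (N * R)) ^ T * (norm (x0 - xs))\<^sup>2
       + 2 * \<gamma>\<^sup>2 / \<mu> * sigma2_max * (1 - (q ^ (N * R)) ^ T)"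
proof -
  let ?Q = "q ^ (N * R)" and ?K = "2 * \<gamma>\<^sup>2 / \<mu> * sigma2_max"
  define S where "S = (\<Sum>t<T. ?Q ^ (T - Suc t))"
  have "0 \<le> S"
    unfolding S_def using q_nonneg by (simp add: sum_nonneg)
  have "(norm (rrcli gr \<gamma> \<eta> \<theta> N C R (\<lambda>_. \<omega>) x0 T - xs))\<^sup>2
      \<le> ?Q ^ T * (norm (x0 - xs))\<^sup>2 + S * epoch_noise \<omega>" if "\<omega> \<in> \<Omega>" for \<omega>
    using linear_recurrence_le[OF zero_le_power[OF q_nonneg], where k = T
        and e = "\<lambda>t. (norm (rrcli gr \<gamma> \<eta> \<theta> N C R (\<lambda>_. \<omega>) x0 t - xs))\<^sup>2"
        and b = "\<lambda>_. epoch_noise \<omega>"]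
      epoch_dist_le[OF that]
    by (simp add: S_def sum_distrib_right)
  then have "avg \<Omega> (\<lambda>\<omega>. (norm (rrcli gr \<gamma> \<eta> \<theta> N C R (\<lambda>_. \<omega>) x0 T - xs))\<^sup>2)
      \<le> avg \<Omega> (\<lambda>\<omega>. ?Q ^ T * (norm (x0 - xs))\<^sup>2 + S * epoch_noise \<omega>)"
    by (rule avg_mono)
  also have "\<dots> = ?Q ^ T * (norm (x0 - xs))\<^sup>2 + S * avg \<Omega> epoch_noise"
    using finite_epoch_outcomes epoch_outcomes_nonempty by (simp add: avg_add avg_const avg_mult_left)
  also have "\<dots> \<le> ?Q ^ T * (norm (x0 - xs))\<^sup>2 + S * (?K * (1 - ?Q))"
    using avg_epoch_noise_le \<open>0 \<le> S\<close> by (intro add_left_mono mult_left_mono)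
  also have "S * (?K * (1 - ?Q)) = ?K * (1 - ?Q ^ T)"
    using one_minus_mult_sum_power_rev[of ?Q T] by (simp add: S_def mult_ac)
  finally show ?thesis .
qed

end

theorem theorem1:
  fixes f :: "nat \<Rightarrow> nat \<Rightarrow> 'a::euclidean_space \<Rightarrow> real"
    and gr :: "nat \<Rightarrow> nat \<Rightarrow> 'a \<Rightarrow> 'a"
    and M N C R T :: nat
    and L \<mu> \<gamma> \<eta> \<theta> :: real
    and x0 xs :: 'a
  assumes MCR: "M = C * R" and C_pos: "C > 0" and R_pos: "R > 0" and N_pos: "N > 0"
    and T_pos: "T \<ge> 1"
    and grad: "\<And>m j x. m < M \<Longrightarrow> j < N \<Longrightarrow> GDERIV (f m j) x :> gr m j x"
    and smooth: "\<And>m j. m < M \<Longrightarrow> j < N \<Longrightarrow> L_smooth L (gr m j)"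
    and sconv: "\<And>m j. m < M \<Longrightarrow> j < N \<Longrightarrow> strongly_convex_grad \<mu> (f m j) (gr m j)"
    and mu_pos: "\<mu> > 0"
    and xs_min: "\<And>y. (1 / real M) * (\<Sum>m<M. (1 / real N) * (\<Sum>j<N. f m j xs))
                  \<le> (1 / real M) * (\<Sum>m<M. (1 / real N) * (\<Sum>j<N. f m j y))"
    and gamma_pos: "\<gamma> > 0" and gamma_le: "\<gamma> \<le> 1 / L"
    and eta_def: "\<eta> = \<gamma> * real N"
    and theta_def: "\<theta> = \<eta> * real R"
  shows
    \<comment> \<open>permutations resampled independently at every meta-epoch\<close>
    "avg (PiE {..<T} (\<lambda>_. epoch_outcomes M N))
         (\<lambda>ws. (norm (rrcli gr \<gamma> \<eta> \<theta> N C R ws x0 T - xs))\<^sup>2)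
       \<le> (1 - \<gamma> * \<mu>) ^ (N * R * T) * (norm (x0 - xs))\<^sup>2
         + 2 * \<gamma>\<^sup>2 / \<mu> * Max {sigma2_DS f gr \<gamma> xs M N C m r j | m r j. r < R \<and> m < M \<and> j < N}
     \<and>
    \<comment> \<open>permutations sampled once before the first meta-epoch and reused\<close>
     avg (epoch_outcomes M N)
         (\<lambda>\<omega>. (norm (rrcli gr \<gamma> \<eta> \<theta> N C R (\<lambda>_. \<omega>) x0 T - xs))\<^sup>2)
       \<le> (1 - \<gamma> * \<mu>) ^ (N * R * T) * (norm (x0 - xs))\<^sup>2
         + 2 * \<gamma>\<^sup>2 / \<mu> * Max {sigma2_DS f gr \<gamma> xs M N C m r j | m r j. r < R \<and> m < M \<and> j < N}"
proof -
  have "0 < M"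
    using MCR C_pos R_pos by simp
  have "(\<Sum>(m, j)\<in>{..<M} \<times> {..<N}. f m j xs) \<le> (\<Sum>(m, j)\<in>{..<M} \<times> {..<N}. f m j y)" for y
  proof -
    have "(1 / real M) * (\<Sum>m<M. (1 / real N) * (\<Sum>j<N. f m j z))
        = (\<Sum>(m, j)\<in>{..<M} \<times> {..<N}. f m j z) / (real M * real N)" for z
      by (simp add: sum.cartesian_product[symmetric] sum_divide_distrib[symmetric] mult.commute)
    then show ?thesis
      using xs_min[of y] \<open>0 < M\<close> N_pos by (simp add: divide_le_cancel)
  qed
  then have "(\<Sum>(m, j)\<in>{..<M} \<times> {..<N}. gr m j xs) = 0"
    using grad by (intro sum_gradients_zero_at_minimum[where h = "\<lambda>(m, j). f m j"]) (auto simp: case_prod_beta)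
  then interpret rr_cli f gr M N C R L \<mu> \<gamma> \<eta> \<theta> xs
    using assms by unfold_locales (simp_all add: sum.cartesian_product)
  have power_eq: "(q ^ (N * R)) ^ T = (1 - \<gamma> * \<mu>) ^ (N * R * T)"
    by (simp add: q_def power_mult)
  have "2 * \<gamma>\<^sup>2 / \<mu> * sigma2_max * (1 - (q ^ (N * R)) ^ T) \<le> 2 * \<gamma>\<^sup>2 / \<mu> * sigma2_max"
    by (rule mult_left_le) (use q_nonneg sigma2_max_nonneg mu_pos in simp_all)
  then show ?thesis
    using expected_dist_resampled_le[of T x0] expected_dist_reused_le[of x0 T]
    unfolding power_eq sigma2_max_def by linarith
qed

end
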